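(* Let $T$ be a torus and $\mathcal S$ a finite set of closed subgroups of $T$. There exists an open cover $\mathcal U$ of $T\times T$ adapted to $\mathcal S$. Moreover, any refinement of $\mathcal U$ is also adapted to $\mathcal S$.
   Context: $\mathbb T=\mathbb R/\mathbb Z$, $\check T=\mathrm{Hom}(\mathbb T,T)$, $\mathfrak t=\check T\otimes\mathbb R$, $\pi:\mathfrak t\times\mathfrak t\to T\times T=\check T\otimes\mathbb T^2$ the quotient map. Preorder on $T\times T$: $c\le d$ iff for every $H\in\mathcal S$, $d\in H\times H$ implies $c\in H\times H$. An open $U\subset T\times T$ is small if $\pi^{-1}(U)$ is a disjoint union of connected components $V$ with $\pi|_V:V\to U$ bijective. An open cover $\mathcal U=\{U_c\}_{c\in T\times T}$ indexed by the points of $T\times T$ is adapted to $\mathcal S$ if: (1) $c\in U_c$ and $U_c$ is small; (2) if $U_c\cap U_d\neq\emptyset$ then $c\le d$ or $d\le c$; (3) if $c\le d$ and for some $H\in\mathcal S$ we have $c\in H\times H$ but $d\notin H\times H$, then $U_d\cap(H\times H)=\emptyset$; (4) if $c,d\in H\times H$ for some $H\in\mathcal S$ and $U_c\cap U_d\neq\emptyset$, then $c$ and $d$ lie in the same connected component of $H\times H$. A refinement of $\{U_c\}$ means an indexed open cover $\{U'_c\}_{c\in T\times T}$ with $c\in U'_c\subset U_c$ for all $c$. *)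

theory Defs
  imports "HOL-Analysis.Analysis"
begin

text \<open>Concrete model of an n-dimensional torus T = (S^1)^n inside complex^n,
  with group law componentwise multiplication. The quotient map
  R^n -> T is x |-> (exp(2 pi i x_k))_k, so that T = R^n / Z^n, the
  cocharacter lattice is Z^n and the Lie algebra t is R^n.\<close>

definition torus :: "(complex^'n) set" where
  "torus = {z. \<forall>i. cmod (z $ i) = 1}"

definition closed_subgroup :: "(complex^'n) set \<Rightarrow> bool" where
  "closed_subgroup H \<longleftrightarrow>
     H \<subseteq> torus \<and> closed H \<and> (\<chi> i. 1) \<in> H \<and>
     (\<forall>x\<in>H. \<forall>y\<in>H. (\<chi> i. x $ i * y $ i) \<in> H) \<and>
     (\<forall>x\<in>H. (\<chi> i. inverse (x $ i)) \<in> H)"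

definition tmap :: "real^'n \<Rightarrow> complex^'n" where
  "tmap x = (\<chi> i. exp (2 * of_real pi * \<i> * of_real (x $ i)))"

definition qmap :: "(real^'n) \<times> (real^'n) \<Rightarrow> (complex^'n) \<times> (complex^'n)" where
  "qmap p = (tmap (fst p), tmap (snd p))"

abbreviation TT :: "((complex^'n) \<times> (complex^'n)) set" where
  "TT \<equiv> torus \<times> torus"

text \<open>Small open sets: the preimage under pi is a disjoint union of (open, hence
  unions of connected components) pieces V, each mapped bijectively onto U.\<close>
definition small :: "((complex^'n) \<times> (complex^'n)) set \<Rightarrow> bool" where
  "small U \<longleftrightarrow> openin (top_of_set TT) U \<and>
     (\<exists>\<V>. disjoint \<V> \<and> \<Union>\<V> = qmap -` U \<and>
          (\<forall>V\<in>\<V>. open V \<and> bij_betw qmap V U))"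

definition tpre :: "(complex^'n) set set \<Rightarrow> (complex^'n) \<times> (complex^'n) \<Rightarrow> (complex^'n) \<times> (complex^'n) \<Rightarrow> bool" where
  "tpre S c d \<longleftrightarrow> (\<forall>H\<in>S. d \<in> H \<times> H \<longrightarrow> c \<in> H \<times> H)"

definition adapted :: "(complex^'n) set set \<Rightarrow>
    ((complex^'n) \<times> (complex^'n) \<Rightarrow> ((complex^'n) \<times> (complex^'n)) set) \<Rightarrow> bool" where
  "adapted S U \<longleftrightarrow>
     (\<Union>c\<in>TT. U c) = TT \<and>
     (\<forall>c\<in>TT. c \<in> U c \<and> small (U c)) \<and>
     (\<forall>c\<in>TT. \<forall>d\<in>TT. U c \<inter> U d \<noteq> {} \<longrightarrow> tpre S c d \<or> tpre S d c) \<and>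
     (\<forall>c\<in>TT. \<forall>d\<in>TT. \<forall>H\<in>S. tpre S c d \<and> c \<in> H \<times> H \<and> d \<notin> H \<times> H
         \<longrightarrow> U d \<inter> (H \<times> H) = {}) \<and>
     (\<forall>c\<in>TT. \<forall>d\<in>TT. \<forall>H\<in>S. c \<in> H \<times> H \<and> d \<in> H \<times> H \<and> U c \<inter> U d \<noteq> {}
         \<longrightarrow> connected_component (H \<times> H) c d)"

definition refinement ::
   "((complex^'n) \<times> (complex^'n) \<Rightarrow> ((complex^'n) \<times> (complex^'n)) set) \<Rightarrow>
    ((complex^'n) \<times> (complex^'n) \<Rightarrow> ((complex^'n) \<times> (complex^'n)) set) \<Rightarrow> bool" where
  "refinement U' U \<longleftrightarrow>
     (\<Union>c\<in>TT. U' c) = TT \<and>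
     (\<forall>c\<in>TT. openin (top_of_set TT) (U' c) \<and> c \<in> U' c \<and> U' c \<subseteq> U c)"

end

theory Submission
  imports Defs
begin

text \<open>Small balls of T \<times> T are evenly covered by the quotient map, because the lattice \<int>^n of
  periods has minimal distance 1. A closed subgroup H of T is uniformly locally connected: the
  small elements of its preimage in t lie on lines contained in that preimage, so nearby points
  of H are joined by arcs of one-parameter subgroups. Let U c be the ball around c whose radius is
  the minimum of a radius of even covering, of half the local connectedness constants of the
  H \<in> S, and of half the distances from c to the H \<times> H not containing c. If two such balls meet,
  their centres are closer than twice the larger radius, which yields conditions (2)-(4). All
  conditions pass to open subsets, so refinements are adapted as well.\<close>

section \<open>Closed subgroups of Euclidean space\<close>

lemma int_multiple_in_subgroup:
  fixes L :: "'a::real_vector set"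
  assumes "0 \<in> L" "\<And>x y. x \<in> L \<Longrightarrow> y \<in> L \<Longrightarrow> x + y \<in> L" "\<And>x. x \<in> L \<Longrightarrow> - x \<in> L"
    and "x \<in> L"
  shows "of_int m *\<^sub>R x \<in> L"
proof -
  have nat: "of_nat n *\<^sub>R x \<in> L" for n
    by (induction n) (auto simp: assms scaleR_add_left)
  show ?thesis
  proof (cases "m \<ge> 0")
    case True
    then show ?thesis using nat[of "nat m"] by simp
  next
    case False
    then show ?thesis using assms(3)[OF nat[of "nat (- m)"]] by simp
  qed
qed

text \<open>The integer multiples of q k nearest to t sgn (q k) converge to t l.\<close>
lemma closed_subgroup_contains_limit_line:
  fixes L :: "'a::real_normed_vector set"
  assumes "closed L" "0 \<in> L" "\<And>x y. x \<in> L \<Longrightarrow> y \<in> L \<Longrightarrow> x + y \<in> L" "\<And>x. x \<in> L \<Longrightarrow> - x \<in> L"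
    and q: "\<And>k. q k \<in> L" "\<And>k. q k \<noteq> 0" "q \<longlonglongrightarrow> 0" "(\<lambda>k. sgn (q k)) \<longlonglongrightarrow> l"
  shows "t *\<^sub>R l \<in> L"
proof -
  define y where "y k = of_int \<lfloor>t / norm (q k)\<rfloor> *\<^sub>R q k" for k
  have "y k \<in> L" for k
    unfolding y_def using assms(2-4) q(1) by (rule int_multiple_in_subgroup)
  have y_close: "norm (y k - t *\<^sub>R sgn (q k)) \<le> norm (q k)" for k
  proof -
    let ?s = "t / norm (q k)"
    have "y k - t *\<^sub>R sgn (q k) = (of_int \<lfloor>?s\<rfloor> - ?s) *\<^sub>R q k"
      by (simp add: y_def sgn_div_norm scaleR_diff_left divide_inverse)
    moreover have "\<bar>of_int \<lfloor>?s\<rfloor> - ?s\<bar> \<le> 1"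
      using of_int_floor_le[of ?s] real_of_int_floor_add_one_gt[of ?s] by linarith
    ultimately show ?thesis
      by (simp add: mult_left_le_one_le)
  qed
  have "(\<lambda>k. y k - t *\<^sub>R sgn (q k)) \<longlonglongrightarrow> 0"
    by (rule Lim_null_comparison[OF always_eventually tendsto_norm_zero[OF q(3)]]) (use y_close in blast)
  then have "(\<lambda>k. (y k - t *\<^sub>R sgn (q k)) + t *\<^sub>R sgn (q k)) \<longlonglongrightarrow> 0 + t *\<^sub>R l"
    using q(4) by (intro tendsto_intros)
  then have "y \<longlonglongrightarrow> t *\<^sub>R l"
    by simp
  with \<open>closed L\<close> \<open>\<And>k. y k \<in> L\<close> show ?thesis
    by (metis closed_sequentially)
qed

lemma subspace_orthogonal_component:
  fixes V :: "'a::euclidean_space set"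
  assumes "subspace V"
  obtains q where "x - q \<in> V" "\<And>w. w \<in> V \<Longrightarrow> orthogonal q w" "norm q \<le> norm x"
proof -
  have "span V = V"
    using assms span_eq_iff by blast
  then obtain p q where pq: "p \<in> V" "\<And>w. w \<in> V \<Longrightarrow> orthogonal q w" "x = p + q"
    using orthogonal_subspace_decomp_exists[of V x] by metis
  then have "(norm x)\<^sup>2 = (norm p)\<^sup>2 + (norm q)\<^sup>2"
    using norm_add_Pythagorean[of p q] by (simp add: orthogonal_commute)
  then have "norm q \<le> norm x"
    by (simp add: power2_le_imp_le)
  then show ?thesis
    using that[of q] pq by simp
qed

text \<open>A limit direction of the q k is a unit vector which is orthogonal to every line in L, but
  which spans a line in L.\<close>
lemma closed_subgroup_null_sequence_not_orthogonal_to_lines: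
  fixes L :: "'a::euclidean_space set"
  assumes L: "closed L" "0 \<in> L" "\<And>x y. x \<in> L \<Longrightarrow> y \<in> L \<Longrightarrow> x + y \<in> L" "\<And>x. x \<in> L \<Longrightarrow> - x \<in> L"
    and q: "\<And>k. q k \<in> L" "\<And>k. q k \<noteq> 0" "q \<longlonglongrightarrow> 0"
    and orth: "\<And>k w. (\<forall>t. t *\<^sub>R w \<in> L) \<Longrightarrow> orthogonal (q k) w"
  shows False
proof -
  have "\<forall>k. sgn (q k) \<in> sphere 0 1"
    using q(2) by (simp add: norm_sgn)
  then obtain l r where l: "l \<in> sphere 0 1" "strict_mono r" "((\<lambda>k. sgn (q k)) \<circ> r) \<longlonglongrightarrow> l"
    by (rule seq_compactE[OF compact_imp_seq_compact[OF compact_sphere]])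
  have "t *\<^sub>R l \<in> L" for t
    using q LIMSEQ_subseq_LIMSEQ[OF q(3) l(2)] l(3)
    by (intro closed_subgroup_contains_limit_line[OF L, of "q \<circ> r"]) (simp_all add: o_def)
  then have "(\<lambda>k. sgn (q (r k)) \<bullet> l) \<longlonglongrightarrow> 0"
    using orth by (simp add: orthogonal_def sgn_div_norm)
  moreover have "(\<lambda>k. sgn (q (r k)) \<bullet> l) \<longlonglongrightarrow> l \<bullet> l"
    using l(3) by (intro tendsto_intros) (simp add: o_def)
  ultimately have "l \<bullet> l = 0"
    using LIMSEQ_unique by blast
  then show False
    using l(1) by simp
qed

text \<open>Otherwise there are small elements x k of L off the largest subspace V contained in L, and
  their components orthogonal to V contradict the previous lemma.\<close>
lemma closed_subgroup_small_elements_on_lines: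
  fixes L :: "'a::euclidean_space set"
  assumes L: "closed L" "0 \<in> L" "\<And>x y. x \<in> L \<Longrightarrow> y \<in> L \<Longrightarrow> x + y \<in> L" "\<And>x. x \<in> L \<Longrightarrow> - x \<in> L"
  obtains \<epsilon> where "\<epsilon> > 0" "\<And>x t. x \<in> L \<Longrightarrow> norm x < \<epsilon> \<Longrightarrow> t *\<^sub>R x \<in> L"
proof (rule ccontr)
  define V where "V = {x. \<forall>t. t *\<^sub>R x \<in> L}"
  have "V \<subseteq> L"
    unfolding V_def by (metis (mono_tags) mem_Collect_eq scaleR_one subsetI)
  have "subspace V"
    unfolding subspace_def V_def using L(2,3) by (auto simp: scaleR_add_right)
  assume "\<not> thesis"
  have "\<forall>k::nat. \<exists>x. x \<in> L \<and> norm x < 1 / Suc k \<and> x \<notin> V"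
  proof (rule allI, rule ccontr)
    fix k :: nat
    assume "\<nexists>x. x \<in> L \<and> norm x < 1 / Suc k \<and> x \<notin> V"
    then have "t *\<^sub>R x \<in> L" if "x \<in> L" "norm x < 1 / Suc k" for x t
      using that by (auto simp: V_def)
    then show False
      using \<open>\<not> thesis\<close> that[of "1 / Suc k"] by simp
  qed
  then obtain x where "\<forall>k. x k \<in> L \<and> norm (x k) < 1 / Suc k \<and> x k \<notin> V"
    unfolding choice_iff by blast
  moreover have "\<forall>k. \<exists>q. x k - q \<in> V \<and> (\<forall>w\<in>V. orthogonal q w) \<and> norm q \<le> norm (x k)"
    using subspace_orthogonal_component[OF \<open>subspace V\<close>] by metis
  then obtain q where "\<forall>k. x k - q k \<in> V \<and> (\<forall>w\<in>V. orthogonal (q k) w) \<and> norm (q k) \<le> norm (x k)"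
    unfolding choice_iff by blast
  ultimately have xq: "\<And>k. x k \<in> L" "\<And>k. x k \<notin> V" "\<And>k. x k - q k \<in> V"
    and q_orth: "\<And>k w. w \<in> V \<Longrightarrow> orthogonal (q k) w"
    and q_le: "\<And>k. norm (q k) \<le> norm (x k)" and x_small: "\<And>k. norm (x k) < 1 / Suc k"
    by auto
  have q_small: "norm (q k) \<le> inverse (Suc k)" for k
    unfolding inverse_eq_divide using q_le[of k] x_small[of k] by linarith
  show False
  proof (rule closed_subgroup_null_sequence_not_orthogonal_to_lines[OF L])
    show "q k \<in> L" for k
      using L(3)[OF xq(1)[of k] L(4)[OF subsetD[OF \<open>V \<subseteq> L\<close> xq(3)[of k]]]] by simp
    show "q k \<noteq> 0" for k
      using xq(2,3) by (metis diff_zero)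
    show "q \<longlonglongrightarrow> 0"
      by (rule Lim_null_comparison[OF always_eventually LIMSEQ_inverse_real_of_nat]) (use q_small in blast)
    show "orthogonal (q k) w" if "\<forall>t. t *\<^sub>R w \<in> L" for k w
      using q_orth that by (simp add: V_def)
  qed
qed

section \<open>The quotient map onto the torus\<close>

definition lattice :: "(real^'n) set" where
  "lattice = {k. \<forall>i. k $ i \<in> \<int>}"

lemma exp_two_pi_i_eq_iff:
  "exp (2 * of_real pi * \<i> * of_real s) = exp (2 * of_real pi * \<i> * of_real t) \<longleftrightarrow> s - t \<in> \<int>"
proof -
  have "exp (2 * of_real pi * \<i> * of_real s) = exp (2 * of_real pi * \<i> * of_real t) \<longleftrightarrow>
        (\<exists>n::int. s = t + of_int n)"
  proof -
    have "pi * (s * 2) = pi * (t * 2) + pi * (of_int n * 2) \<longleftrightarrow> s = t + of_int n" for n :: int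
    proof -
      have "pi * (s * 2) = pi * (t * 2) + pi * (of_int n * 2) \<longleftrightarrow> pi * 2 * (s - (t + of_int n)) = 0"
        by (auto simp: algebra_simps)
      then show ?thesis by simp
    qed
    then show ?thesis unfolding exp_eq by (simp add: complex_eq_iff field_simps)
  qed
  also have "\<dots> \<longleftrightarrow> s - t \<in> \<int>"
    by (metis Ints_cases Ints_of_int add_diff_cancel_left' diff_add_cancel)
  finally show ?thesis .
qed

lemma tmap_eq_iff: "tmap x = tmap y \<longleftrightarrow> x - y \<in> lattice"
  by (simp add: tmap_def lattice_def vec_eq_iff exp_two_pi_i_eq_iff)

lemma lattice_eq_0_if_norm_less_1: 
  assumes "k \<in> lattice" "norm k < 1" shows "k = 0"
proof -
  have "k $ i = 0" for i
  proof -
    have "\<bar>k $ i\<bar> < 1" using component_le_norm_cart[of k i] assms(2) by linarith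
    moreover obtain m :: int where "k $ i = of_int m"
      using assms(1) by (auto simp: lattice_def elim: Ints_cases)
    ultimately show ?thesis by simp
  qed
  then show ?thesis by (simp add: vec_eq_iff)
qed

lemma tmap_add: "tmap (x + y) = tmap x * tmap y"
  by (simp add: tmap_def vec_eq_iff distrib_left exp_add)

lemma tmap_0 [simp]: "tmap 0 = 1"
  by (simp add: tmap_def vec_eq_iff)

lemma tmap_uminus: "tmap (- x) = (\<chi> i. inverse (tmap x $ i))"
  by (simp add: tmap_def vec_eq_iff exp_minus)

lemma lattice_diff: "k \<in> lattice \<Longrightarrow> k' \<in> lattice \<Longrightarrow> k - k' \<in> lattice"
  by (simp add: lattice_def)

lemma lattice_eq_if_dist_less_1:
  assumes "k \<in> lattice" "k' \<in> lattice" "dist k k' < 1" shows "k = k'"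
  using lattice_eq_0_if_norm_less_1[OF lattice_diff[OF assms(1,2)]] assms(3) by (simp add: dist_norm)

lemma tmap_eq_if_dist_less_1:
  assumes "tmap x = tmap y" "dist x y < 1" shows "x = y"
  using lattice_eq_0_if_norm_less_1[of "x - y"] assms by (simp add: tmap_eq_iff dist_norm)

lemma tmap_add_lattice: "k \<in> lattice \<Longrightarrow> tmap (x + k) = tmap x"
  by (simp add: tmap_eq_iff)

lemma tmap_in_torus: "tmap x \<in> torus"
  by (simp add: torus_def tmap_def norm_exp_eq_Re)

lemma continuous_on_tmap [continuous_intros]:
  "continuous_on S f \<Longrightarrow> continuous_on S (\<lambda>x. tmap (f x))"
  unfolding tmap_def by (intro continuous_intros)

lemma norm_torus_mult: "c \<in> torus \<Longrightarrow> norm (c * x) = norm x"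
  by (simp add: torus_def norm_vec_def norm_mult)

lemma dist_tmap_diff: "dist (tmap (x - y)) 1 = dist (tmap x) (tmap y)"
proof -
  have "dist (tmap (x - y)) 1 = norm (tmap (- y) * (tmap x - tmap y))"
    by (simp add: dist_norm ring_distribs flip: tmap_add)
  then show ?thesis by (simp add: norm_torus_mult tmap_in_torus dist_norm)
qed

definition tlog :: "complex^'n \<Rightarrow> real^'n" where
  "tlog z = (\<chi> i. Im (Ln (z $ i)) / (2 * pi))"

lemma tmap_tlog: "z \<in> torus \<Longrightarrow> tmap (tlog z) = z"
proof -
  assume z: "z \<in> torus"
  have "exp (\<i> * of_real (Im (Ln (z $ i)))) = z $ i" for i
  proof -
    have "cmod (z $ i) = 1" using z by (simp add: torus_def)
    then have "Re (Ln (z $ i)) = 0"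
      by (subst Re_Ln) auto
    then have "Ln (z $ i) = \<i> * of_real (Im (Ln (z $ i)))"
      by (simp add: complex_eq_iff)
    then show ?thesis
      by (metis \<open>cmod (z $ i) = 1\<close> exp_Ln norm_zero zero_neq_one)
  qed
  then show ?thesis by (simp add: tmap_def tlog_def vec_eq_iff)
qed

lemma isCont_tlog_1: "isCont tlog 1"
proof -
  have "continuous_on (ball 1 1) tlog"
    unfolding tlog_def
  proof (intro continuous_intros ballI)
    fix i and z :: "complex^'n" assume "z \<in> ball 1 1"
    then have "dist 1 (z $ i) < 1"
      using dist_vec_nth_le[of "1::complex^'n" i z] by simp
    then have "Re (1 - z $ i) < 1"
      using complex_Re_le_cmod[of "1 - z $ i"] by (simp add: dist_norm)
    then show "z $ i \<notin> \<real>\<^sub>\<le>\<^sub>0"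
      by (simp add: complex_nonpos_Reals_iff)
  qed simp
  then show ?thesis
    by (meson centre_in_ball continuous_on_eq_continuous_at open_ball zero_less_one)
qed

lemma tlog_1 [simp]: "tlog 1 = 0"
  by (simp add: tlog_def vec_eq_iff)

lemma tmap_local_lift:
  assumes "\<epsilon> > 0"
  obtains \<eta> where "\<eta> > 0"
    "\<And>x :: real^'n. dist (tmap x) 1 < \<eta> \<Longrightarrow> \<exists>v. norm v < \<epsilon> \<and> tmap v = tmap x"
proof -
  obtain \<eta> where "\<eta> > 0" and \<eta>: "\<And>z :: complex^'n. dist z 1 < \<eta> \<Longrightarrow> dist (tlog z) (tlog 1) < \<epsilon>"
    using isCont_tlog_1 assms unfolding continuous_at_eps_delta by blast
  show ?thesis
  proof (rule that[OF \<open>\<eta> > 0\<close>])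
    fix x :: "real^'n" assume "dist (tmap x) 1 < \<eta>"
    then have "norm (tlog (tmap x)) < \<epsilon>"
      using \<eta>[of "tmap x"] by simp
    moreover have "tmap (tlog (tmap x)) = tmap x"
      by (simp add: tmap_tlog tmap_in_torus)
    ultimately show "\<exists>v. norm v < \<epsilon> \<and> tmap v = tmap x"
      by blast
  qed
qed

lemma closed_subgroup_tmap_vimage:
  assumes "closed_subgroup H"
  shows "closed (tmap -` H)" and "0 \<in> tmap -` H"
    and "x \<in> tmap -` H \<Longrightarrow> y \<in> tmap -` H \<Longrightarrow> x + y \<in> tmap -` H"
    and "x \<in> tmap -` H \<Longrightarrow> - x \<in> tmap -` H"
proof -
  have H: "closed H" "1 \<in> H" "\<And>x y. x \<in> H \<Longrightarrow> y \<in> H \<Longrightarrow> x * y \<in> H"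
    "\<And>x. x \<in> H \<Longrightarrow> (\<chi> i. inverse (x $ i)) \<in> H"
    using assms unfolding closed_subgroup_def times_vec_def one_vec_def by auto
  show "closed (tmap -` H)"
    using H(1) by (intro closed_vimage continuous_intros)
  show "0 \<in> tmap -` H"
    using H(2) by simp
  show "x \<in> tmap -` H \<Longrightarrow> y \<in> tmap -` H \<Longrightarrow> x + y \<in> tmap -` H"
    using H(3) by (simp add: tmap_add)
  show "x \<in> tmap -` H \<Longrightarrow> - x \<in> tmap -` H"
    using H(4) by (simp add: tmap_uminus)
qed

lemma connected_component_Times:
  assumes "connected_component A a b" "connected_component B a' b'"
  shows "connected_component (A \<times> B) (a, a') (b, b')"
proof -
  obtain T where "connected T" "T \<subseteq> A" "a \<in> T" "b \<in> T"
    using assms(1) unfolding connected_component_def by blast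
  moreover obtain T' where "connected T'" "T' \<subseteq> B" "a' \<in> T'" "b' \<in> T'"
    using assms(2) unfolding connected_component_def by blast
  ultimately show ?thesis
    unfolding connected_component_def by (intro exI[of _ "T \<times> T'"]) (auto intro: connected_Times)
qed

lemma connected_component_along_line:
  assumes add: "\<And>x y. x \<in> tmap -` H \<Longrightarrow> y \<in> tmap -` H \<Longrightarrow> x + y \<in> tmap -` H"
    and "u \<in> tmap -` H" "\<And>t. t *\<^sub>R v \<in> tmap -` H"
  shows "connected_component H (tmap u) (tmap (u + v))"
proof -
  define \<gamma> where "\<gamma> t = tmap (u + t *\<^sub>R v)" for t
  have "\<gamma> ` {0..1} \<subseteq> H"
    using add[OF assms(2,3)] by (auto simp: \<gamma>_def)
  moreover have "connected (\<gamma> ` {0..1})"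
    unfolding \<gamma>_def by (intro connected_continuous_image connected_Icc continuous_intros)
  moreover have "tmap u \<in> \<gamma> ` {0..1}" "tmap (u + v) \<in> \<gamma> ` {0..1}"
    unfolding \<gamma>_def by (force intro: image_eqI[of _ _ 0], force intro: image_eqI[of _ _ 1])
  ultimately show ?thesis
    unfolding connected_component_def by blast
qed

text \<open>Nearby points h, h' of H are joined inside H along the line through a small lift v of h'/h:
  v lies in the closed subgroup tmap -` H of real^'n, hence so does the whole line through v.\<close>
lemma closed_subgroup_locally_connected:
  fixes H :: "(complex^'n) set"
  assumes "closed_subgroup H"
  obtains \<delta> where "\<delta> > 0"
    "\<And>h h'. h \<in> H \<Longrightarrow> h' \<in> H \<Longrightarrow> dist h h' < \<delta> \<Longrightarrow> connected_component H h h'"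
proof -
  note L = closed_subgroup_tmap_vimage[OF assms]
  obtain \<epsilon> where "\<epsilon> > 0" and lines: "\<And>x t. x \<in> tmap -` H \<Longrightarrow> norm x < \<epsilon> \<Longrightarrow> t *\<^sub>R x \<in> tmap -` H"
    using closed_subgroup_small_elements_on_lines[OF L] by blast
  obtain \<delta> where "\<delta> > 0" and lift: "\<And>x :: real^'n. dist (tmap x) 1 < \<delta> \<Longrightarrow> \<exists>v. norm v < \<epsilon> \<and> tmap v = tmap x"
    using tmap_local_lift[OF \<open>\<epsilon> > 0\<close>] by blast
  have "connected_component H h h'" if h: "h \<in> H" "h' \<in> H" "dist h h' < \<delta>" for h h' :: "complex^'n"
  proof -
    have "H \<subseteq> torus"
      using assms by (simp add: closed_subgroup_def)
    then have u: "tmap (tlog h) = h" "tmap (tlog h') = h'"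
      using h tmap_tlog by blast+
    then have "dist (tmap (tlog h' - tlog h)) 1 < \<delta>"
      using h(3) by (metis dist_commute dist_tmap_diff)
    then obtain v where v: "norm v < \<epsilon>" "tmap v = tmap (tlog h' - tlog h)"
      using lift by blast
    have "tlog h \<in> tmap -` H" "tlog h' \<in> tmap -` H"
      using u h by simp_all
    then have "tlog h' + - tlog h \<in> tmap -` H"
      using L(3,4) by blast
    then have "v \<in> tmap -` H"
      using v(2) by simp
    then have "connected_component H (tmap (tlog h)) (tmap (tlog h + v))"
      using connected_component_along_line[OF L(3) \<open>tlog h \<in> tmap -` H\<close>] lines v(1) by blast
    moreover have "tmap (tlog h + v) = tmap (tlog h + (tlog h' - tlog h))"
      by (simp only: tmap_add v(2))
    ultimately show ?thesis
      using u by simp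
  qed
  with \<open>\<delta> > 0\<close> that show ?thesis
    by blast
qed

section \<open>Evenly covered sets\<close>

definition evenly_covered :: "('a::topological_space \<Rightarrow> 'b) \<Rightarrow> 'b set \<Rightarrow> bool" where
  "evenly_covered p U \<longleftrightarrow>
     (\<exists>\<V>. disjoint \<V> \<and> \<Union>\<V> = p -` U \<and> (\<forall>V\<in>\<V>. open V \<and> bij_betw p V U))"

lemma small_iff_evenly_covered:
  "small U \<longleftrightarrow> openin (top_of_set TT) U \<and> evenly_covered qmap U"
  unfolding small_def evenly_covered_def by (rule refl)

lemma evenly_covered_subset:
  assumes "evenly_covered p U" "W \<subseteq> U" "open (p -` W)"
  shows "evenly_covered p W"
proof -
  obtain \<V> where \<V>: "disjoint \<V>" "\<Union>\<V> = p -` U" "\<And>V. V \<in> \<V> \<Longrightarrow> open V \<and> bij_betw p V U"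
    using assms(1) unfolding evenly_covered_def by blast
  define \<W> where "\<W> = (\<lambda>V. V \<inter> p -` W) ` \<V>"
  have "disjoint \<W>"
    unfolding \<W>_def using \<V>(1) by (rule disjoint_image_subset) blast
  moreover have "\<Union>\<W> = p -` W"
  proof -
    have "\<Union>\<W> = \<Union>\<V> \<inter> p -` W"
      unfolding \<W>_def by blast
    also have "\<dots> = p -` W"
      using assms(2) unfolding \<V>(2) by blast
    finally show ?thesis .
  qed
  moreover have "open V' \<and> bij_betw p V' W" if "V' \<in> \<W>" for V'
  proof -
    from that obtain V where V: "V \<in> \<V>" and V': "V' = V \<inter> p -` W"
      unfolding \<W>_def by blast
    have "open V" "bij_betw p V U"
      using \<V>(3)[OF V] by auto
    moreover have "p ` V' = W"
      using \<open>bij_betw p V U\<close> assms(2) unfolding V' bij_betw_def by blast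
    moreover have "V' \<subseteq> V"
      unfolding V' by blast
    ultimately show ?thesis
      using bij_betw_subset[of p V U V' W] assms(3) unfolding V' by (simp add: open_Int)
  qed
  ultimately show ?thesis
    unfolding evenly_covered_def by (intro exI[of _ \<W>] conjI ballI) auto
qed

lemma evenly_covered_Times:
  assumes "evenly_covered p U" "evenly_covered q W"
  shows "evenly_covered (map_prod p q) (U \<times> W)"
proof -
  obtain \<V> where \<V>: "disjoint \<V>" "\<Union>\<V> = p -` U" "\<And>V. V \<in> \<V> \<Longrightarrow> open V \<and> bij_betw p V U"
    using assms(1) unfolding evenly_covered_def by blast
  obtain \<V>' where \<V>': "disjoint \<V>'" "\<Union>\<V>' = q -` W" "\<And>V. V \<in> \<V>' \<Longrightarrow> open V \<and> bij_betw q V W"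
    using assms(2) unfolding evenly_covered_def by blast
  define \<W> where "\<W> = (\<lambda>(V, V'). V \<times> V') ` (\<V> \<times> \<V>')"
  have "disjoint \<W>"
  proof (rule pairwiseI)
    fix X Y assume "X \<in> \<W>" "Y \<in> \<W>" "X \<noteq> Y"
    then obtain A B A' B' where AB: "A \<in> \<V>" "B \<in> \<V>'" "A' \<in> \<V>" "B' \<in> \<V>'"
      and XY: "X = A \<times> B" "Y = A' \<times> B'" "A \<noteq> A' \<or> B \<noteq> B'"
      unfolding \<W>_def by auto
    then have "disjnt A A' \<or> disjnt B B'"
      using pairwiseD[OF \<V>(1) AB(1,3)] pairwiseD[OF \<V>'(1) AB(2,4)] by blast
    then show "disjnt X Y"
      unfolding XY disjnt_def by auto
  qed
  moreover have "\<Union>\<W> = map_prod p q -` (U \<times> W)"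
  proof -
    have "\<Union>\<W> = \<Union>\<V> \<times> \<Union>\<V>'"
      unfolding \<W>_def by blast
    then show ?thesis
      using \<V>(2) \<V>'(2) by auto
  qed
  moreover have "open X \<and> bij_betw (map_prod p q) X (U \<times> W)" if "X \<in> \<W>" for X
    using that \<V>(3) \<V>'(3) by (auto simp: \<W>_def open_Times bij_betw_map_prod)
  ultimately show ?thesis
    unfolding evenly_covered_def by (intro exI[of _ \<W>] conjI ballI) auto
qed

text \<open>If \<eta> is small enough for points within \<eta> of 1 to lift within 1/2 of 0, the sheets over
  torus \<inter> ball c \<eta> are the following lattice translates.\<close>
definition sheet :: "complex^'n \<Rightarrow> real \<Rightarrow> real^'n \<Rightarrow> (real^'n) set" where
  "sheet c \<eta> k = ball (tlog c + k) (1/2) \<inter> tmap -` ball c \<eta>"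

lemma disjoint_sheets: "disjoint (sheet c \<eta> ` lattice)"
proof (rule pairwiseI, clarsimp simp: disjnt_iff)
  fix k k' x assume k: "k \<in> lattice" "k' \<in> lattice" "sheet c \<eta> k \<noteq> sheet c \<eta> k'"
    "x \<in> sheet c \<eta> k" "x \<in> sheet c \<eta> k'"
  then have "dist (tlog c + k) x < 1/2" "dist (tlog c + k') x < 1/2"
    by (simp_all add: sheet_def)
  then have "dist k k' < 1"
    using dist_triangle_half_l[of "tlog c + k" x 1 "tlog c + k'"] by simp
  then show False
    using k lattice_eq_if_dist_less_1 by blast
qed

lemma in_sheet:
  fixes c :: "complex^'n"
  assumes lift: "\<And>x :: real^'n. dist (tmap x) 1 < \<eta> \<Longrightarrow> \<exists>v. norm v < 1/2 \<and> tmap v = tmap x"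
    and "c \<in> torus" "dist c (tmap x) < \<eta>"
  shows "\<exists>k\<in>lattice. x \<in> sheet c \<eta> k"
proof -
  have "dist (tmap (x - tlog c)) 1 < \<eta>"
    using assms(3) tmap_tlog[OF assms(2)] by (metis dist_commute dist_tmap_diff)
  then obtain v where v: "norm v < 1/2" "tmap v = tmap (x - tlog c)"
    using lift by blast
  have "x - tlog c - v \<in> lattice"
    using v(2)[symmetric] unfolding tmap_eq_iff .
  moreover have "x \<in> sheet c \<eta> (x - tlog c - v)"
    using v(1) assms(3) by (simp add: sheet_def dist_norm)
  ultimately show ?thesis
    by blast
qed

lemma bij_betw_sheet:
  fixes c :: "complex^'n"
  assumes lift: "\<And>x :: real^'n. dist (tmap x) 1 < \<eta> \<Longrightarrow> \<exists>v. norm v < 1/2 \<and> tmap v = tmap x"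
    and "c \<in> torus" "k \<in> lattice"
  shows "bij_betw tmap (sheet c \<eta> k) (torus \<inter> ball c \<eta>)"
proof (rule bij_betw_imageI)
  show "inj_on tmap (sheet c \<eta> k)"
    by (rule inj_onI, rule tmap_eq_if_dist_less_1)
      (auto simp: sheet_def intro: dist_triangle_half_r[of "tlog c + k" _ 1])
  show "tmap ` sheet c \<eta> k = torus \<inter> ball c \<eta>"
  proof
    show "tmap ` sheet c \<eta> k \<subseteq> torus \<inter> ball c \<eta>"
      using tmap_in_torus by (auto simp: sheet_def)
    show "torus \<inter> ball c \<eta> \<subseteq> tmap ` sheet c \<eta> k"
    proof
      fix w assume w: "w \<in> torus \<inter> ball c \<eta>"
      then have u: "tmap (tlog w) = w"
        by (simp add: tmap_tlog)
      with w have "dist c (tmap (tlog w)) < \<eta>"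
        by simp
      then obtain k' where k': "k' \<in> lattice" "tlog w \<in> sheet c \<eta> k'"
        using in_sheet[OF lift \<open>c \<in> torus\<close>] by blast
      then have "tmap (tlog w + (k - k')) = w"
        using u assms(3) by (simp add: tmap_add_lattice lattice_diff)
      moreover have "dist (tlog c + k) (tlog w + (k - k')) = dist (tlog c + k') (tlog w)"
        by (simp add: dist_norm algebra_simps)
      ultimately have "tlog w + (k - k') \<in> sheet c \<eta> k"
        using k' w by (simp add: sheet_def)
      with \<open>tmap (tlog w + (k - k')) = w\<close> show "w \<in> tmap ` sheet c \<eta> k"
        by force
    qed
  qed
qed

lemma tmap_evenly_covers_balls:
  obtains \<eta> where "\<eta> > 0" "\<And>c :: complex^'n. c \<in> torus \<Longrightarrow> evenly_covered tmap (torus \<inter> ball c \<eta>)"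
proof -
  obtain \<eta> :: real where "\<eta> > 0"
    and lift: "\<And>x :: real^'n. dist (tmap x) 1 < \<eta> \<Longrightarrow> \<exists>v. norm v < 1/2 \<and> tmap v = tmap x"
    using tmap_local_lift[of "1/2"] by auto
  have "evenly_covered tmap (torus \<inter> ball c \<eta>)" if c: "c \<in> torus" for c :: "complex^'n"
    unfolding evenly_covered_def
  proof (intro exI conjI ballI)
    show "disjoint (sheet c \<eta> ` lattice)"
      by (rule disjoint_sheets)
    show "\<Union>(sheet c \<eta> ` lattice) = tmap -` (torus \<inter> ball c \<eta>)"
    proof
      show "\<Union>(sheet c \<eta> ` lattice) \<subseteq> tmap -` (torus \<inter> ball c \<eta>)"
        using tmap_in_torus by (auto simp: sheet_def)
      show "tmap -` (torus \<inter> ball c \<eta>) \<subseteq> \<Union>(sheet c \<eta> ` lattice)"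
      proof
        fix x assume "x \<in> tmap -` (torus \<inter> ball c \<eta>)"
        then have "dist c (tmap x) < \<eta>"
          by simp
        then show "x \<in> \<Union>(sheet c \<eta> ` lattice)"
          using in_sheet[OF lift c] by blast
      qed
    qed
    fix V assume "V \<in> sheet c \<eta> ` lattice"
    then obtain k where k: "k \<in> lattice" and V: "V = sheet c \<eta> k"
      by blast
    show "open V"
      unfolding V sheet_def by (intro open_Int open_ball open_vimage continuous_intros)
    show "bij_betw tmap V (torus \<inter> ball c \<eta>)"
      unfolding V by (rule bij_betw_sheet[OF lift c k])
  qed
  with \<open>\<eta> > 0\<close> that show ?thesis
    by blast
qed

section \<open>Adapted covers\<close>

lemma qmap_eq_map_prod: "qmap = map_prod tmap tmap"
  by (simp add: qmap_def fun_eq_iff)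

lemma small_subset:
  assumes "small U" "openin (top_of_set TT) U'" "U' \<subseteq> U"
  shows "small U'"
proof -
  obtain G where "open G" and U': "U' = TT \<inter> G"
    using assms(2) by (auto simp: openin_open)
  have "qmap -` U' = qmap -` G"
    unfolding U' by (auto simp: qmap_def tmap_in_torus)
  moreover have "open (qmap -` G)"
    unfolding qmap_def using \<open>open G\<close> by (intro open_vimage continuous_intros)
  ultimately have "evenly_covered qmap U'"
    using assms(1,3) evenly_covered_subset[of qmap U U'] by (simp add: small_iff_evenly_covered)
  with assms(2) show ?thesis
    by (simp add: small_iff_evenly_covered)
qed

lemma small_torus_balls:
  obtains \<eta> where "\<eta> > 0" "\<And>c :: (complex^'n) \<times> (complex^'n). c \<in> TT \<Longrightarrow> small (TT \<inter> ball c \<eta>)"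
proof -
  obtain \<eta> where "\<eta> > 0"
    and cover: "\<And>a :: complex^'n. a \<in> torus \<Longrightarrow> evenly_covered tmap (torus \<inter> ball a \<eta>)"
    using tmap_evenly_covers_balls by blast
  have "small (TT \<inter> ball c \<eta>)" if c: "c \<in> TT" for c :: "(complex^'n) \<times> (complex^'n)"
  proof (rule small_subset)
    let ?B = "(torus \<inter> ball (fst c) \<eta>) \<times> (torus \<inter> ball (snd c) \<eta>)"
    have "?B = TT \<inter> (ball (fst c) \<eta> \<times> ball (snd c) \<eta>)"
      by blast
    then have "openin (top_of_set TT) ?B"
      by (simp add: openin_open_Int open_Times)
    moreover have "evenly_covered qmap ?B"
      unfolding qmap_eq_map_prod using c by (intro evenly_covered_Times cover) auto
    ultimately show "small ?B"
      by (simp add: small_iff_evenly_covered)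
    show "openin (top_of_set TT) (TT \<inter> ball c \<eta>)"
      by (simp add: openin_open_Int)
    show "TT \<inter> ball c \<eta> \<subseteq> ?B"
    proof
      fix x assume x: "x \<in> TT \<inter> ball c \<eta>"
      then have "dist (fst c) (fst x) < \<eta>" "dist (snd c) (snd x) < \<eta>"
        using dist_fst_le[of c x] dist_snd_le[of c x] by auto
      with x show "x \<in> ?B"
        by (auto simp: mem_Times_iff)
    qed
  qed
  with \<open>\<eta> > 0\<close> that show ?thesis
    by blast
qed

lemma dist_less_twice_max_if_balls_meet:
  assumes "ball c r \<inter> ball d s \<noteq> {}"
  shows "dist c d < 2 * max r s"
proof -
  obtain x where "dist c x < r" "dist d x < s"
    using assms by auto
  then have "dist c d < r + s"
    by (rule dist_triangle_less_add)
  then show ?thesis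
    using max.cobounded1[of r s] max.cobounded2[of s r] by linarith
qed

lemma tpre_if_dist_less:
  assumes "\<And>H. H \<in> S \<Longrightarrow> c \<notin> H \<times> H \<Longrightarrow> ball c r \<inter> (H \<times> H) = {}" "dist c d < r"
  shows "tpre S c d"
  unfolding tpre_def
proof (intro ballI impI)
  fix H assume "H \<in> S" "d \<in> H \<times> H"
  then have "ball c r \<inter> (H \<times> H) \<noteq> {}"
    using assms(2) by (auto simp: disjoint_iff)
  then show "c \<in> H \<times> H"
    using assms(1) \<open>H \<in> S\<close> by blast
qed

text \<open>The hypotheses concern twice the radius because the centres of two meeting balls are closer
  than twice the larger radius.\<close>
lemma adapted_ballsI:
  fixes S :: "(complex^'n) set set" and R :: "(complex^'n) \<times> (complex^'n) \<Rightarrow> real"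
  assumes small: "\<And>c. c \<in> TT \<Longrightarrow> 0 < R c \<and> small (TT \<inter> ball c (R c))"
    and sep: "\<And>c H. c \<in> TT \<Longrightarrow> H \<in> S \<Longrightarrow> c \<notin> H \<times> H \<Longrightarrow> ball c (2 * R c) \<inter> (H \<times> H) = {}"
    and conn: "\<And>c H p q. c \<in> TT \<Longrightarrow> H \<in> S \<Longrightarrow> p \<in> H \<times> H \<Longrightarrow> q \<in> H \<times> H \<Longrightarrow>
      dist p q < 2 * R c \<Longrightarrow> connected_component (H \<times> H) p q"
  shows "adapted S (\<lambda>c. TT \<inter> ball c (R c))"
proof -
  have near: "dist c d < 2 * R c \<or> dist d c < 2 * R d"
    if "(TT \<inter> ball c (R c)) \<inter> (TT \<inter> ball d (R d)) \<noteq> {}" for c d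
  proof -
    have "ball c (R c) \<inter> ball d (R d) \<noteq> {}"
      using that by blast
    from dist_less_twice_max_if_balls_meet[OF this] show ?thesis
      by (simp add: max_def dist_commute split: if_splits)
  qed
  show ?thesis
    unfolding adapted_def
  proof (intro conjI ballI impI allI)
    show "(\<Union>c\<in>TT. TT \<inter> ball c (R c)) = TT"
      using small by (blast intro: centre_in_ball[THEN iffD2])
  next
    fix c :: "(complex^'n) \<times> (complex^'n)" assume "c \<in> TT"
    then show "c \<in> TT \<inter> ball c (R c)" "small (TT \<inter> ball c (R c))"
      using small by auto
  next
    fix c d :: "(complex^'n) \<times> (complex^'n)"
    assume "c \<in> TT" "d \<in> TT" "(TT \<inter> ball c (R c)) \<inter> (TT \<inter> ball d (R d)) \<noteq> {}"
    then show "tpre S c d \<or> tpre S d c"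
      using near sep tpre_if_dist_less by metis
  next
    fix c d :: "(complex^'n) \<times> (complex^'n)" and H
    assume "c \<in> TT" "d \<in> TT" "H \<in> S" "tpre S c d \<and> c \<in> H \<times> H \<and> d \<notin> H \<times> H"
    then have "ball d (2 * R d) \<inter> (H \<times> H) = {}"
      using sep[of d H] by blast
    moreover have "ball d (R d) \<subseteq> ball d (2 * R d)"
      using small \<open>d \<in> TT\<close> by (simp add: subset_ball)
    ultimately show "(TT \<inter> ball d (R d)) \<inter> (H \<times> H) = {}"
      by blast
  next
    fix c d :: "(complex^'n) \<times> (complex^'n)" and H
    assume cd: "c \<in> TT" "d \<in> TT" "H \<in> S"
      "c \<in> H \<times> H \<and> d \<in> H \<times> H \<and> (TT \<inter> ball c (R c)) \<inter> (TT \<inter> ball d (R d)) \<noteq> {}"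
    then have "dist c d < 2 * R c \<or> dist c d < 2 * R d"
      using near by (metis dist_commute)
    then show "connected_component (H \<times> H) c d"
      using conn[OF cd(1,3), of c d] conn[OF cd(2,3), of c d] cd(4) by blast
  qed
qed

lemma adapted_antimono:
  fixes S :: "(complex^'n) set set"
  assumes "adapted S U" "(\<Union>c\<in>TT. U' c) = TT"
    and U': "\<And>c. c \<in> TT \<Longrightarrow> c \<in> U' c \<and> small (U' c) \<and> U' c \<subseteq> U c"
  shows "adapted S U'"
proof -
  have meet: "U c \<inter> U d \<noteq> {}" if "c \<in> TT" "d \<in> TT" "U' c \<inter> U' d \<noteq> {}"
    for c d :: "(complex^'n) \<times> (complex^'n)"
    using U'[OF that(1)] U'[OF that(2)] that(3) by blast
  obtain comparable: "\<forall>c\<in>TT. \<forall>d\<in>TT. U c \<inter> U d \<noteq> {} \<longrightarrow> tpre S c d \<or> tpre S d c"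
    and separated: "\<forall>c\<in>TT. \<forall>d\<in>TT. \<forall>H\<in>S. tpre S c d \<and> c \<in> H \<times> H \<and> d \<notin> H \<times> H
      \<longrightarrow> U d \<inter> (H \<times> H) = {}"
    and connected: "\<forall>c\<in>TT. \<forall>d\<in>TT. \<forall>H\<in>S. c \<in> H \<times> H \<and> d \<in> H \<times> H \<and> U c \<inter> U d \<noteq> {}
      \<longrightarrow> connected_component (H \<times> H) c d"
    using assms(1) unfolding adapted_def by (elim conjE)
  show ?thesis
    unfolding adapted_def
  proof (intro conjI ballI impI allI)
    show "(\<Union>c\<in>TT. U' c) = TT"
      by (rule assms(2))
  next
    fix c :: "(complex^'n) \<times> (complex^'n)" assume "c \<in> TT"
    then show "c \<in> U' c" "small (U' c)"
      using U' by auto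
  next
    fix c d :: "(complex^'n) \<times> (complex^'n)" assume cd: "c \<in> TT" "d \<in> TT" "U' c \<inter> U' d \<noteq> {}"
    show "tpre S c d \<or> tpre S d c"
      using comparable cd(1,2) meet[OF cd] by blast
  next
    fix c d :: "(complex^'n) \<times> (complex^'n)" and H
    assume cd: "c \<in> TT" "d \<in> TT" "H \<in> S" "tpre S c d \<and> c \<in> H \<times> H \<and> d \<notin> H \<times> H"
    have "U d \<inter> (H \<times> H) = {}"
      using separated cd by blast
    then show "U' d \<inter> (H \<times> H) = {}"
      using U'[OF cd(2)] by blast
  next
    fix c d :: "(complex^'n) \<times> (complex^'n)" and H
    assume cd: "c \<in> TT" "d \<in> TT" "H \<in> S" "c \<in> H \<times> H \<and> d \<in> H \<times> H \<and> U' c \<inter> U' d \<noteq> {}"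
    then have "U c \<inter> U d \<noteq> {}"
      using meet by blast
    then show "connected_component (H \<times> H) c d"
      using connected cd by blast
  qed
qed

lemma adapted_refinement:
  fixes S :: "(complex^'n) set set"
  assumes "adapted S U" "refinement U' U"
  shows "adapted S U'"
proof (rule adapted_antimono[OF assms(1)])
  show "(\<Union>c\<in>TT. U' c) = TT"
    using assms(2) by (simp add: refinement_def)
  fix c :: "(complex^'n) \<times> (complex^'n)" assume c: "c \<in> TT"
  have "\<forall>c\<in>TT. c \<in> U c \<and> small (U c)"
    using assms(1) unfolding adapted_def by (elim conjE)
  then have "small (U c)"
    using c by blast
  moreover have "openin (top_of_set TT) (U' c)" "c \<in> U' c" "U' c \<subseteq> U c"
    using assms(2) c unfolding refinement_def by auto
  ultimately show "c \<in> U' c \<and> small (U' c) \<and> U' c \<subseteq> U c"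
    using small_subset by blast
qed

lemma closed_subgroup_squares_locally_connected:
  fixes S :: "(complex^'n) set set"
  assumes "\<forall>H\<in>S. closed_subgroup H"
  obtains \<delta> where "\<And>H. H \<in> S \<Longrightarrow> \<delta> H > 0"
    "\<And>H p q. H \<in> S \<Longrightarrow> p \<in> H \<times> H \<Longrightarrow> q \<in> H \<times> H \<Longrightarrow> dist p q < \<delta> H \<Longrightarrow>
      connected_component (H \<times> H) p q"
proof -
  have "\<forall>H\<in>S. \<exists>\<delta>>0. \<forall>h\<in>H. \<forall>h'\<in>H. dist h h' < \<delta> \<longrightarrow> connected_component H h h'"
  proof
    fix H assume "H \<in> S"
    then obtain \<delta> where "\<delta> > 0"
      "\<And>h h'. h \<in> H \<Longrightarrow> h' \<in> H \<Longrightarrow> dist h h' < \<delta> \<Longrightarrow> connected_component H h h'"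
      using assms closed_subgroup_locally_connected by blast
    then show "\<exists>\<delta>>0. \<forall>h\<in>H. \<forall>h'\<in>H. dist h h' < \<delta> \<longrightarrow> connected_component H h h'"
      by blast
  qed
  then obtain \<delta> where \<delta>: "\<And>H. H \<in> S \<Longrightarrow> \<delta> H > 0"
    "\<And>H h h'. H \<in> S \<Longrightarrow> h \<in> H \<Longrightarrow> h' \<in> H \<Longrightarrow> dist h h' < \<delta> H \<Longrightarrow> connected_component H h h'"
    unfolding bchoice_iff by blast
  have "connected_component (H \<times> H) p q"
    if "H \<in> S" "p \<in> H \<times> H" "q \<in> H \<times> H" "dist p q < \<delta> H" for H p q
  proof -
    have "connected_component H (fst p) (fst q)" "connected_component H (snd p) (snd q)"
      using that \<delta>(2)[of H] dist_fst_le[of p q] dist_snd_le[of p q] by (simp_all add: mem_Times_iff)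
    from connected_component_Times[OF this] show ?thesis
      by simp
  qed
  with \<delta>(1) show ?thesis
    by (rule that)
qed

lemma exists_separating_radius:
  fixes A :: "'i \<Rightarrow> 'a::metric_space set"
  assumes "finite I" "\<eta> > 0" "\<forall>i\<in>I. \<delta> i > 0 \<and> closed (A i) \<and> A i \<noteq> {}"
  obtains R where "\<And>c. 0 < R c" "\<And>c. R c \<le> \<eta>" "\<And>c i. i \<in> I \<Longrightarrow> 2 * R c \<le> \<delta> i"
    "\<And>c i. i \<in> I \<Longrightarrow> c \<notin> A i \<Longrightarrow> ball c (2 * R c) \<inter> A i = {}"
proof -
  define radii where
    "radii c = insert \<eta> ((\<lambda>i. \<delta> i / 2) ` I \<union> (\<lambda>i. infdist c (A i) / 2) ` {i \<in> I. c \<notin> A i})" for c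
  define R where "R c = Min (radii c)" for c
  have fin: "finite (radii c)" "radii c \<noteq> {}" for c
    using assms(1) by (simp_all add: radii_def)
  have R_le: "R c \<le> r" if "r \<in> radii c" for c r
    using fin that by (simp add: R_def)
  have "r > 0" if "r \<in> radii c" for r c
  proof -
    have "infdist c (A i) > 0" if "i \<in> I" "c \<notin> A i" for i
      using assms(3) that by (simp add: infdist_pos_not_in_closed)
    then show ?thesis
      using \<open>r \<in> radii c\<close> assms(2,3) unfolding radii_def by auto
  qed
  then have pos: "0 < R c" for c
    unfolding R_def using fin by (simp add: Min_gr_iff)
  have le_eta: "R c \<le> \<eta>" for c
    using R_le[of \<eta> c] by (simp add: radii_def)
  have le_delta: "2 * R c \<le> \<delta> i" if "i \<in> I" for c i
    using R_le[of "\<delta> i / 2" c] that by (simp add: radii_def)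
  have sep: "ball c (2 * R c) \<inter> A i = {}" if "i \<in> I" "c \<notin> A i" for c i
  proof -
    have "2 * R c \<le> infdist c (A i)"
      using R_le[of "infdist c (A i) / 2" c] that by (simp add: radii_def)
    then have "2 * R c \<le> dist c y" if "y \<in> A i" for y
      using infdist_le[OF that, of c] by linarith
    then show ?thesis
      by (auto simp: not_less[symmetric])
  qed
  from pos le_eta le_delta sep show ?thesis
    by (rule that)
qed

lemma exists_adapted_cover:
  fixes S :: "(complex^'n) set set"
  assumes "finite S" and "\<forall>H\<in>S. closed_subgroup H"
  shows "\<exists>U. adapted S U"
proof -
  obtain \<eta> where "\<eta> > 0" and small: "\<And>c :: (complex^'n) \<times> (complex^'n). c \<in> TT \<Longrightarrow> small (TT \<inter> ball c \<eta>)"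
    using small_torus_balls by blast
  obtain \<delta> where \<delta>: "\<And>H. H \<in> S \<Longrightarrow> \<delta> H > 0"
    "\<And>H p q. H \<in> S \<Longrightarrow> p \<in> H \<times> H \<Longrightarrow> q \<in> H \<times> H \<Longrightarrow> dist p q < \<delta> H \<Longrightarrow>
      connected_component (H \<times> H) p q"
    using closed_subgroup_squares_locally_connected[OF assms(2)] by blast
  have constraints: "\<forall>H\<in>S. \<delta> H > 0 \<and> closed (H \<times> H) \<and> H \<times> H \<noteq> {}"
    using assms(2) \<delta>(1) by (auto simp: closed_subgroup_def closed_Times)
  obtain R :: "(complex^'n) \<times> (complex^'n) \<Rightarrow> real" where R: "\<And>c. 0 < R c" "\<And>c. R c \<le> \<eta>"
    "\<And>c H. H \<in> S \<Longrightarrow> 2 * R c \<le> \<delta> H"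
    "\<And>c H. H \<in> S \<Longrightarrow> c \<notin> H \<times> H \<Longrightarrow> ball c (2 * R c) \<inter> (H \<times> H) = {}"
    using exists_separating_radius[where A = "\<lambda>H. H \<times> H", OF assms(1) \<open>\<eta> > 0\<close> constraints] by blast
  have "adapted S (\<lambda>c. TT \<inter> ball c (R c))"
  proof (rule adapted_ballsI)
    fix c :: "(complex^'n) \<times> (complex^'n)" assume "c \<in> TT"
    have "TT \<inter> ball c (R c) \<subseteq> TT \<inter> ball c \<eta>"
      using R(2)[of c] by auto
    then show "0 < R c \<and> small (TT \<inter> ball c (R c))"
      using small_subset[OF small[OF \<open>c \<in> TT\<close>] openin_open_Int[OF open_ball]] R(1) by blast
  next
    show "ball c (2 * R c) \<inter> (H \<times> H) = {}" if "H \<in> S" "c \<notin> H \<times> H" for c H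
      using R(4) that by blast
  next
    fix c :: "(complex^'n) \<times> (complex^'n)" and H p q
    assume "H \<in> S" "p \<in> H \<times> H" "q \<in> H \<times> H" "dist p q < 2 * R c"
    moreover have "2 * R c \<le> \<delta> H"
      using R(3) \<open>H \<in> S\<close> by blast
    ultimately show "connected_component (H \<times> H) p q"
      using \<delta>(2) by simp
  qed
  then show ?thesis
    by blast
qed

theorem mainTheorem15:
  fixes S :: "(complex^'n) set set"
  assumes "finite S" and "\<forall>H\<in>S. closed_subgroup H"
  shows "\<exists>U. adapted S U \<and> (\<forall>U'. refinement U' U \<longrightarrow> adapted S U')"
  using exists_adapted_cover[OF assms] adapted_refinement by blast

end
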